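(* Let $d\ge2$, $p_c(z)=\bar z^d+c$, and suppose $p_{c_0}$ has a simple parabolic periodic point $z_0$ of odd period $k$. Then for any sequence $c_n\to c_0$ with $c_n\neq c_0$, the maps $p_{c_n}$ have periodic points $z_n$ and $z'_n$ both converging to $z_0$, with multipliers $\rho_n:=(p_{c_n}^{\circ 2k})'(z_n)\to1$ and $\rho'_n:=(p_{c_n}^{\circ 2k})'(z'_n)\to1$, such that for all large $n$ one of the following holds: (a) both $z_n$ and $z'_n$ have period $k$, $\rho_n,\rho'_n\in\mathbb{R}$, and one of the two orbits is attracting while the other is repelling; or (b) $z_n=z'_n$ lies on a parabolic orbit of period $k$; or (c) $z_n$ and $z'_n$ both have period $2k$, lie on the same orbit of $p_{c_n}$, satisfy $p_{c_n}^{\circ k}(z_n)=z'_n$ and $p_{c_n}^{\circ k}(z'_n)=z_n$, and their multipliers satisfy $\rho'_n=\overline{\rho_n}\notin\mathbb{R}$ and $\operatorname{Re}(\rho_n-1)=O(\operatorname{Im}(\rho_n)^2)$.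
   Context: A periodic point $z_0$ of odd period $k$ of $p_c$ is parabolic if $(p_c^{\circ2k})'(z_0)=1$ ($p_c^{\circ2k}$ is holomorphic), and simple if $p_c^{\circ2k}(z_0+w)=z_0+w+aw^2+O(w^3)$ with $a\neq0$. *)

theory Defs
  imports "HOL-Analysis.Analysis" "HOL-Library.Landau_Symbols"
begin

definition pc :: "nat \<Rightarrow> complex \<Rightarrow> complex \<Rightarrow> complex" where
  "pc d c = (\<lambda>z. cnj z ^ d + c)"

definition has_period :: "(complex \<Rightarrow> complex) \<Rightarrow> nat \<Rightarrow> complex \<Rightarrow> bool" where
  "has_period f k z \<longleftrightarrow> 0 < k \<and> (f ^^ k) z = z \<and> (\<forall>j. 0 < j \<and> j < k \<longrightarrow> (f ^^ j) z \<noteq> z)"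

definition mult2 :: "nat \<Rightarrow> complex \<Rightarrow> nat \<Rightarrow> complex \<Rightarrow> complex" where
  "mult2 d c k z = deriv (pc d c ^^ (2 * k)) z"

definition parabolic :: "nat \<Rightarrow> complex \<Rightarrow> nat \<Rightarrow> complex \<Rightarrow> bool" where
  "parabolic d c k z \<longleftrightarrow> has_period (pc d c) k z \<and> odd k \<and> mult2 d c k z = 1"

definition simple_parabolic :: "nat \<Rightarrow> complex \<Rightarrow> nat \<Rightarrow> complex \<Rightarrow> bool" where
  "simple_parabolic d c k z0 \<longleftrightarrow> parabolic d c k z0 \<and>
     (\<exists>a. a \<noteq> 0 \<and>
        (\<lambda>w. (pc d c ^^ (2 * k)) (z0 + w) - (z0 + w + a * w ^ 2)) \<in> O[at 0](\<lambda>w. w ^ 3))"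

end

theory Submission
  imports Defs "HOL-Computational_Algebra.Fundamental_Theorem_Algebra"
begin

text \<open>
  The displacement \<open>G\<^sub>c(w) = p\<^sub>c\<^sup>2\<^sup>k(z\<^sub>0 + w) - (z\<^sub>0 + w)\<close> is a monic polynomial whose
  coefficients depend continuously on \<open>c\<close>, and simplicity of the parabolic point means that
  \<open>G\<^sub>c\<^sub>0\<close> vanishes to order exactly two at \<open>0\<close>. Hence for \<open>c\<close> near \<open>c\<^sub>0\<close> we can write
  \<open>G\<^sub>c = (w - r\<^sub>1)(w - r\<^sub>2) U\<^sub>c\<close> with small roots \<open>r\<^sub>1, r\<^sub>2\<close> and \<open>U\<^sub>c\<close> bounded away from zero and
  uniformly Lipschitz near \<open>0\<close>. The points \<open>z\<^sub>0 + r\<^sub>i\<close> are then the only fixed points of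
  \<open>p\<^sub>c\<^sup>2\<^sup>k\<close> near \<open>z\<^sub>0\<close>, their multipliers \<open>\<rho>\<^sub>i = 1 + (r\<^sub>i - r\<^sub>j) U\<^sub>c(r\<^sub>i)\<close> tend to \<open>1\<close>, and the
  sum of their holomorphic indices \<open>1/(1 - \<rho>\<^sub>1) + 1/(1 - \<rho>\<^sub>2)\<close> stays bounded.

  Since \<open>k\<close> is odd, \<open>p\<^sub>c\<^sup>k = conj \<circ> h\<close> with \<open>h\<close> holomorphic; \<open>p\<^sub>c\<^sup>k\<close> either fixes or swaps the
  two points, and \<open>\<rho>(x) = conj (h'(p\<^sub>c\<^sup>k x)) h'(x)\<close>. If it fixes them, the multipliers \<open>|h'|\<^sup>2\<close>
  are real and non-negative, and the index bound forces \<open>1 - \<rho>\<^sub>1\<close> and \<open>1 - \<rho>\<^sub>2\<close> to have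
  opposite signs unless the points coincide. If it swaps them, \<open>\<rho>\<^sub>2 = conj \<rho>\<^sub>1\<close>, and for
  \<open>X = 1 - \<rho>\<^sub>1\<close> the bounded index sum \<open>2 Re X / |X|\<^sup>2\<close> gives \<open>|Re X| = O((Im X)\<^sup>2)\<close>.
\<close>

section \<open>Polynomials with convergent coefficients\<close>

lemma monic_poly_has_small_root:
  fixes P :: "complex poly"
  assumes "lead_coeff P = 1" "degree P \<ge> 1"
  shows "\<exists>r. poly P r = 0 \<and> norm r ^ degree P \<le> norm (poly P 0)"
proof -
  define m where "m = degree P"
  obtain rt where "smult (lead_coeff P) (\<Prod>i<m. [:-rt i, 1:]) = P"
    using complex_poly_decompose' unfolding m_def by blast
  hence P: "P = (\<Prod>i<m. [:-rt i, 1:])" using assms(1) by simp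
  define i0 where "i0 = arg_min_on (\<lambda>i. norm (rt i)) {..<m}"
  have "{..<m} \<noteq> {}" using assms(2) by (simp add: m_def lessThan_empty_iff)
  hence i0: "i0 < m" and min: "\<And>i. i < m \<Longrightarrow> norm (rt i0) \<le> norm (rt i)"
    using arg_min_if_finite[of "{..<m}" "\<lambda>i. norm (rt i)"] unfolding i0_def
    by (auto simp: not_less)
  have "poly P (rt i0) = 0"
    unfolding P poly_prod using i0 by (intro prod_zero) auto
  moreover have "norm (rt i0) ^ m \<le> norm (poly P 0)"
  proof -
    have "norm (rt i0) ^ m \<le> (\<Prod>i<m. norm (rt i))"
      using prod_mono[of "{..<m}" "\<lambda>_. norm (rt i0)" "\<lambda>i. norm (rt i)"] min by simp
    also have "\<dots> = norm (poly P 0)"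
      unfolding P poly_prod by (simp add: prod_norm[symmetric] del: prod_norm)
    finally show ?thesis .
  qed
  ultimately show ?thesis unfolding m_def by blast
qed

lemma bigo_power_pCons:
  fixes Q :: "complex poly"
  assumes "(\<lambda>w. poly (pCons a Q) w) \<in> O[at 0](\<lambda>w. w ^ Suc n)"
  shows "a = 0" "(\<lambda>w. poly Q w) \<in> O[at 0](\<lambda>w. w ^ n)"
proof -
  have "\<exists>C>0. eventually (\<lambda>w. norm (poly (pCons a Q) w) \<le> C * norm (w ^ Suc n)) (at 0)"
    using assms by (elim landau_o.bigE) auto
  then obtain C where C: "eventually (\<lambda>w. norm (poly (pCons a Q) w) \<le> C * norm (w ^ Suc n)) (at 0)"
    by blast
  have l1: "((\<lambda>w. norm (poly (pCons a Q) w)) \<longlongrightarrow> norm (poly (pCons a Q) 0)) (at 0)"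
    using poly_isCont[where p = "pCons a Q" and x = 0] unfolding isCont_def by (rule tendsto_norm)
  have l2: "((\<lambda>w::complex. C * norm (w ^ Suc n)) \<longlongrightarrow> C * norm ((0::complex) ^ Suc n)) (at 0)"
    by (intro tendsto_intros)
  have "norm (poly (pCons a Q) 0) \<le> C * norm ((0::complex) ^ Suc n)"
    by (rule tendsto_le[OF trivial_limit_at l2 l1 C])
  thus "a = 0" by simp
  have "eventually (\<lambda>w. w \<noteq> 0) (at (0::complex))" by (rule eventually_neq_at_within)
  with C have "eventually (\<lambda>w. norm (poly Q w) \<le> C * norm (w ^ n)) (at 0)"
  proof eventually_elim
    case (elim w)
    hence "norm w * norm (poly Q w) \<le> norm w * (C * norm (w ^ n))"
      using \<open>a = 0\<close> by (simp add: norm_mult norm_power)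
    thus ?case using elim(2) by (simp add: mult_le_cancel_left_pos)
  qed
  thus "(\<lambda>w. poly Q w) \<in> O[at 0](\<lambda>w. w ^ n)" by (intro bigoI)
qed

lemma coeff_eq_0_if_bigo_power:
  fixes P :: "complex poly"
  assumes "(\<lambda>w. poly P w) \<in> O[at 0](\<lambda>w. w ^ n)" "i < n"
  shows "coeff P i = 0"
  using assms
proof (induction n arbitrary: P i)
  case 0
  from 0(2) show ?case by simp
next
  case (Suc n)
  obtain a Q where PQ: "P = pCons a Q" by (metis pCons_cases)
  note Q = bigo_power_pCons[OF Suc.prems(1)[unfolded PQ]]
  show ?case
  proof (cases i)
    case 0
    thus ?thesis using Q(1) by (simp add: PQ)
  next
    case (Suc j)
    thus ?thesis using Suc.IH[OF Q(2), of j] Suc.prems(2) by (simp add: PQ)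
  qed
qed

lemma pderiv_two_linear_factors_at_root:
  fixes r1 r2 :: "'a::idom"
  shows "poly (pderiv ([:-r1, 1:] * [:-r2, 1:] * U)) r1 = (r1 - r2) * poly U r1"
  unfolding mult.assoc pderiv_mult by (simp add: pderiv_pCons algebra_simps)

definition coeffs_tendsto :: "(nat \<Rightarrow> 'a::real_normed_field poly) \<Rightarrow> (nat \<Rightarrow> 'a) \<Rightarrow> bool" where
  "coeffs_tendsto P g \<longleftrightarrow> (\<forall>i. (\<lambda>n. coeff (P n) i) \<longlonglongrightarrow> g i)"

lemma coeffs_tendsto_const: "coeffs_tendsto (\<lambda>n. p) (coeff p)"
  unfolding coeffs_tendsto_def by auto

lemma coeffs_tendsto_pConst: "f \<longlonglongrightarrow> x \<Longrightarrow> coeffs_tendsto (\<lambda>n. [:f n:]) (coeff [:x:])"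
  unfolding coeffs_tendsto_def by (auto simp: coeff_pCons split: nat.splits)

lemma coeffs_tendsto_add:
  "coeffs_tendsto P (coeff p) \<Longrightarrow> coeffs_tendsto Q (coeff q) \<Longrightarrow>
   coeffs_tendsto (\<lambda>n. P n + Q n) (coeff (p + q))"
  unfolding coeffs_tendsto_def by (auto intro!: tendsto_add)

lemma coeffs_tendsto_diff:
  "coeffs_tendsto P (coeff p) \<Longrightarrow> coeffs_tendsto Q (coeff q) \<Longrightarrow>
   coeffs_tendsto (\<lambda>n. P n - Q n) (coeff (p - q))"
  unfolding coeffs_tendsto_def by (auto intro!: tendsto_diff)

lemma coeffs_tendsto_mult:
  "coeffs_tendsto P (coeff p) \<Longrightarrow> coeffs_tendsto Q (coeff q) \<Longrightarrow>
   coeffs_tendsto (\<lambda>n. P n * Q n) (coeff (p * q))"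
  unfolding coeffs_tendsto_def coeff_mult by (auto intro!: tendsto_sum tendsto_mult)

lemma coeffs_tendsto_power:
  "coeffs_tendsto P (coeff p) \<Longrightarrow> coeffs_tendsto (\<lambda>n. P n ^ m) (coeff (p ^ m))"
  by (induction m) (auto intro: coeffs_tendsto_mult coeffs_tendsto_const)

lemma coeffs_tendsto_divide_linear:
  assumes G: "\<And>n. G n = [:-r n, 1:] * Q n" and r: "r \<longlonglongrightarrow> 0"
    and deg: "\<And>n. degree (Q n) < D" and g: "coeffs_tendsto G g"
  shows "coeffs_tendsto Q (\<lambda>i. g (Suc i))"
  unfolding coeffs_tendsto_def
proof
  fix i
  have rec: "coeff (Q n) i = coeff (G n) (Suc i) + r n * coeff (Q n) (Suc i)" for n i
    by (simp add: G mult_pCons_left)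
  have high: "(\<lambda>n. coeff (Q n) i) \<longlonglongrightarrow> g (Suc i)" if "D \<le> i" for i
  proof -
    have "coeff (Q n) i = coeff (G n) (Suc i)" for n
      using rec[of n i] deg[of n] that by (simp add: coeff_eq_0)
    thus ?thesis using g unfolding coeffs_tendsto_def by simp
  qed
  show "(\<lambda>n. coeff (Q n) i) \<longlonglongrightarrow> g (Suc i)"
  proof (cases "D \<le> i")
    case False
    hence "i \<le> D" by simp
    thus ?thesis
    proof (induction i rule: inc_induct)
      case (step m)
      have "(\<lambda>n. coeff (G n) (Suc m) + r n * coeff (Q n) (Suc m)) \<longlonglongrightarrow> g (Suc m) + 0 * g (Suc (Suc m))"
        using g unfolding coeffs_tendsto_def by (intro tendsto_intros step.IH r) auto
      thus ?case by (simp only: rec[symmetric]) simp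
    qed (simp add: high)
  qed (rule high)
qed

lemma monic_polys_split_vanishing_root:
  fixes G :: "nat \<Rightarrow> complex poly"
  assumes lc: "\<And>n. lead_coeff (G n) = 1" and deg: "\<And>n. degree (G n) = m" and "m \<ge> 1"
    and coeff0: "(\<lambda>n. coeff (G n) 0) \<longlonglongrightarrow> 0"
  shows "\<exists>r Q. r \<longlonglongrightarrow> 0 \<and>
           (\<forall>n. G n = [:-r n, 1:] * Q n \<and> lead_coeff (Q n) = 1 \<and> degree (Q n) = m - 1)"
proof -
  have "\<forall>n. \<exists>r. poly (G n) r = 0 \<and> norm r ^ m \<le> norm (coeff (G n) 0)"
    using monic_poly_has_small_root[of "G n" for n] lc deg \<open>m \<ge> 1\<close> by (simp add: poly_0_coeff_0)
  then obtain r where root: "\<And>n. poly (G n) (r n) = 0"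
    and small: "\<And>n. norm (r n) ^ m \<le> norm (coeff (G n) 0)" by metis
  define Q where "Q n = synthetic_div (G n) (r n)" for n
  have fac: "G n = [:-r n, 1:] * Q n" for n
    using synthetic_div_correct'[of "r n" "G n"] root[of n] by (simp add: Q_def)
  have "lead_coeff (Q n) = 1" for n
    using lead_coeff_mult[of "[:-r n, 1:]" "Q n"] lc[of n] by (simp only: fac[symmetric]) simp
  moreover have "degree (Q n) = m - 1" for n
    by (simp add: Q_def degree_synthetic_div deg)
  moreover have "r \<longlonglongrightarrow> 0"
  proof (rule Lim_null_comparison)
    have "norm (r n) \<le> root m (norm (coeff (G n) 0))" for n
      using real_root_le_mono[OF _ small[of n], of m] \<open>m \<ge> 1\<close>
      by (simp add: real_root_power_cancel)
    thus "eventually (\<lambda>n. norm (r n) \<le> root m (norm (coeff (G n) 0))) sequentially"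
      by simp
    show "(\<lambda>n. root m (norm (coeff (G n) 0))) \<longlonglongrightarrow> 0"
      using tendsto_real_root[OF tendsto_norm[OF coeff0], of m] by simp
  qed
  ultimately show ?thesis using fac by (intro exI[of _ r] exI[of _ Q]) auto
qed

lemma poly_eq_sum_lessThan:
  fixes p :: "'a::comm_semiring_1 poly"
  assumes "degree p < N"
  shows "poly p x = (\<Sum>i<N. coeff p i * x ^ i)"
proof -
  have "poly p x = (\<Sum>i\<le>degree p. coeff p i * x ^ i)" by (rule poly_altdef)
  also have "\<dots> = (\<Sum>i<N. coeff p i * x ^ i)"
    using assms by (intro sum.mono_neutral_left) (auto simp: coeff_eq_0)
  finally show ?thesis .
qed

lemma norm_poly_le_sum_norm_coeff:
  fixes p :: "'a::real_normed_field poly"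
  assumes "degree p < N" "norm w \<le> 1"
  shows "norm (poly p w) \<le> (\<Sum>i<N. norm (coeff p i))"
proof -
  have "norm (poly p w) \<le> (\<Sum>i<N. norm (coeff p i * w ^ i))"
    unfolding poly_eq_sum_lessThan[OF assms(1)] by (rule norm_sum)
  also have "\<dots> \<le> (\<Sum>i<N. norm (coeff p i))"
    using assms(2) by (intro sum_mono) (simp add: norm_mult norm_power mult_left_le power_le_one)
  finally show ?thesis .
qed

lemma norm_poly_diff_le:
  fixes p :: "'a::real_normed_field poly"
  assumes "degree p < N" "norm w \<le> 1" "norm w' \<le> 1"
  shows "norm (poly p w - poly p w') \<le> N * (\<Sum>i<N. norm (coeff p i)) * norm (w - w')"
proof -
  have "poly p w - poly p w' = (\<Sum>i<N. coeff p i * (w ^ i - w' ^ i))"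
    by (simp add: poly_eq_sum_lessThan[OF assms(1)] sum_subtractf[symmetric] right_diff_distrib)
  also have "norm \<dots> \<le> (\<Sum>i<N. norm (coeff p i) * (N * norm (w - w')))"
  proof (rule order_trans[OF norm_sum], rule sum_mono)
    fix i assume "i \<in> {..<N}"
    hence "norm (w ^ i - w' ^ i) \<le> N * norm (w - w')"
      using norm_power_diff[OF assms(2,3), of i] mult_right_mono[of "real i" N "norm (w - w')"]
      by simp
    thus "norm (coeff p i * (w ^ i - w' ^ i)) \<le> norm (coeff p i) * (N * norm (w - w'))"
      by (simp add: norm_mult mult_left_mono)
  qed
  also have "\<dots> = N * (\<Sum>i<N. norm (coeff p i)) * norm (w - w')"
    by (simp add: sum_distrib_left sum_distrib_right mult_ac)
  finally show ?thesis .
qed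

lemma norm_poly_ge_near_0:
  fixes p :: "'a::real_normed_field poly"
  assumes "degree p < N" "(\<Sum>i<N. norm (coeff p i)) \<le> B" "norm w \<le> \<delta>" "\<delta> \<le> 1"
    and "N * B * \<delta> \<le> norm b / 4" "norm (poly p 0 - b) < norm b / 4"
  shows "norm b / 2 \<le> norm (poly p w)"
proof -
  have "norm (poly p w - poly p 0) \<le> N * (\<Sum>i<N. norm (coeff p i)) * norm w"
    using norm_poly_diff_le[OF assms(1), of w 0] assms(3,4) by simp
  also have "\<dots> \<le> N * B * \<delta>"
    using assms(2,3) order_trans[OF sum_nonneg assms(2)]
    by (intro mult_mono mult_left_mono) (auto intro: sum_nonneg)
  finally have "norm (poly p w - poly p 0) \<le> norm b / 4" using assms(5) by linarith
  moreover have "norm b \<le> norm (poly p w) + norm (poly p w - poly p 0) + norm (poly p 0 - b)"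
    using norm_triangle_ineq4[of "poly p w" "poly p w - b"]
      norm_triangle_ineq[of "poly p w - poly p 0" "poly p 0 - b"] by simp
  ultimately show ?thesis using assms(6) by linarith
qed

lemma eventually_poly_bounds_near_0:
  fixes U :: "nat \<Rightarrow> 'a::real_normed_field poly"
  assumes deg: "\<And>n. degree (U n) < N" and U: "coeffs_tendsto U b" and b0: "b 0 \<noteq> 0"
  obtains \<delta> L K where "\<delta> > 0" "L \<ge> 0"
    "eventually (\<lambda>n. \<forall>w. norm w \<le> \<delta> \<longrightarrow> norm (b 0) / 2 \<le> norm (poly (U n) w)) sequentially"
    "eventually (\<lambda>n. \<forall>w. norm w \<le> \<delta> \<longrightarrow> norm (poly (U n) w) \<le> K) sequentially"
    "eventually (\<lambda>n. \<forall>w w'. norm w \<le> \<delta> \<longrightarrow> norm w' \<le> \<delta> \<longrightarrow>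
       norm (poly (U n) w - poly (U n) w') \<le> L * norm (w - w')) sequentially"
proof -
  define B where "B = (\<Sum>i<N. norm (b i) + 1)"
  define L where "L = N * B"
  define \<delta> where "\<delta> = min 1 (norm (b 0) / (4 * (L + 1)))"
  have "L \<ge> 0" by (simp add: L_def B_def sum_nonneg)
  hence "\<delta> > 0" using b0 by (simp add: \<delta>_def)
  have "\<delta> \<le> 1" by (simp add: \<delta>_def)
  have "\<delta> * (4 * (L + 1)) \<le> norm (b 0)"
    using pos_le_divide_eq[of "4 * (L + 1)" \<delta> "norm (b 0)"] \<open>L \<ge> 0\<close> by (simp add: \<delta>_def)
  hence L\<delta>: "L * \<delta> \<le> norm (b 0) / 4" using \<open>\<delta> > 0\<close> by (simp add: algebra_simps)
  have "eventually (\<lambda>n. norm (coeff (U n) i) < norm (b i) + 1) sequentially" for i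
    using U unfolding coeffs_tendsto_def by (intro order_tendstoD(2)[OF tendsto_norm]) auto
  hence "eventually (\<lambda>n. \<forall>i\<in>{..<N}. norm (coeff (U n) i) < norm (b i) + 1) sequentially"
    by (intro eventually_ball_finite) auto
  hence coeffs_bounded: "eventually (\<lambda>n. (\<Sum>i<N. norm (coeff (U n) i)) \<le> B) sequentially"
    unfolding B_def by eventually_elim (auto intro: sum_mono less_imp_le)
  have "(\<lambda>n. poly (U n) 0 - b 0) \<longlonglongrightarrow> 0"
    using U unfolding coeffs_tendsto_def by (simp add: poly_0_coeff_0 LIM_zero)
  hence const_close: "eventually (\<lambda>n. norm (poly (U n) 0 - b 0) < norm (b 0) / 4) sequentially"
    using b0 by (intro order_tendstoD(2)[OF tendsto_norm_zero]) auto
  have lip: "norm (poly (U n) w - poly (U n) w') \<le> L * norm (w - w')"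
    if "(\<Sum>i<N. norm (coeff (U n) i)) \<le> B" "norm w \<le> \<delta>" "norm w' \<le> \<delta>" for n w w'
    using norm_poly_diff_le[OF deg, of w w' n] that \<open>\<delta> \<le> 1\<close>
      mult_right_mono[of "\<Sum>i<N. norm (coeff (U n) i)" B "real N * norm (w - w')"]
    by (simp add: L_def mult_ac)
  have upper: "norm (poly (U n) w) \<le> B"
    if "(\<Sum>i<N. norm (coeff (U n) i)) \<le> B" "norm w \<le> \<delta>" for n w
    using norm_poly_le_sum_norm_coeff[OF deg[of n], of w] that \<open>\<delta> \<le> 1\<close> by simp
  have lower: "norm (b 0) / 2 \<le> norm (poly (U n) w)"
    if "(\<Sum>i<N. norm (coeff (U n) i)) \<le> B" "norm (poly (U n) 0 - b 0) < norm (b 0) / 4"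
      "norm w \<le> \<delta>" for n w
    using norm_poly_ge_near_0[OF deg that(1,3) \<open>\<delta> \<le> 1\<close> _ that(2)] L\<delta> by (simp add: L_def)
  show ?thesis
  proof (rule that[OF \<open>\<delta> > 0\<close> \<open>L \<ge> 0\<close>])
    show "eventually (\<lambda>n. \<forall>w. norm w \<le> \<delta> \<longrightarrow> norm (b 0) / 2 \<le> norm (poly (U n) w)) sequentially"
      using coeffs_bounded const_close by eventually_elim (blast intro: lower)
    show "eventually (\<lambda>n. \<forall>w. norm w \<le> \<delta> \<longrightarrow> norm (poly (U n) w) \<le> B) sequentially"
      using coeffs_bounded by eventually_elim (blast intro: upper)
    show "eventually (\<lambda>n. \<forall>w w'. norm w \<le> \<delta> \<longrightarrow> norm w' \<le> \<delta> \<longrightarrow>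
        norm (poly (U n) w - poly (U n) w') \<le> L * norm (w - w')) sequentially"
      using coeffs_bounded by eventually_elim (blast intro: lip)
  qed
qed

lemma monic_polys_split_two_vanishing_roots:
  fixes G :: "nat \<Rightarrow> complex poly"
  assumes lc: "\<And>n. lead_coeff (G n) = 1" and deg: "\<And>n. degree (G n) = N" and "N \<ge> 2"
    and G: "coeffs_tendsto G g" and "g 0 = 0" "g 1 = 0"
  shows "\<exists>r1 r2 U. r1 \<longlonglongrightarrow> 0 \<and> r2 \<longlonglongrightarrow> 0 \<and> coeffs_tendsto U (\<lambda>i. g (Suc (Suc i))) \<and>
           (\<forall>n. G n = [:-r1 n, 1:] * [:-r2 n, 1:] * U n \<and> degree (U n) < N)"
proof -
  have "(\<lambda>n. coeff (G n) 0) \<longlonglongrightarrow> 0"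
    using G \<open>g 0 = 0\<close> unfolding coeffs_tendsto_def by metis
  from monic_polys_split_vanishing_root[OF lc deg _ this]
  have "\<exists>r1 Q. r1 \<longlonglongrightarrow> 0 \<and>
           (\<forall>n. G n = [:-r1 n, 1:] * Q n \<and> lead_coeff (Q n) = 1 \<and> degree (Q n) = N - 1)"
    using \<open>N \<ge> 2\<close> by simp
  then obtain r1 Q where r1: "r1 \<longlonglongrightarrow> 0" and Q: "\<And>n. G n = [:-r1 n, 1:] * Q n"
    "\<And>n. lead_coeff (Q n) = 1" "\<And>n. degree (Q n) = N - 1"
    by blast
  have QT: "coeffs_tendsto Q (\<lambda>i. g (Suc i))"
    using Q(3) \<open>N \<ge> 2\<close> by (intro coeffs_tendsto_divide_linear[OF Q(1) r1 _ G, of N]) auto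
  hence "(\<lambda>n. coeff (Q n) 0) \<longlonglongrightarrow> 0"
    using \<open>g 1 = 0\<close> unfolding coeffs_tendsto_def by (metis One_nat_def)
  from monic_polys_split_vanishing_root[OF Q(2,3) _ this]
  have "\<exists>r2 U. r2 \<longlonglongrightarrow> 0 \<and>
           (\<forall>n. Q n = [:-r2 n, 1:] * U n \<and> lead_coeff (U n) = 1 \<and> degree (U n) = N - 1 - 1)"
    using \<open>N \<ge> 2\<close> by simp
  then obtain r2 U where r2: "r2 \<longlonglongrightarrow> 0" and U: "\<And>n. Q n = [:-r2 n, 1:] * U n"
    "\<And>n. degree (U n) = N - 1 - 1"
    by blast
  have "coeffs_tendsto U (\<lambda>i. g (Suc (Suc i)))"
    using U(2) \<open>N \<ge> 2\<close> by (intro coeffs_tendsto_divide_linear[OF U(1) r2 _ QT, of N]) auto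
  moreover have "G n = [:-r1 n, 1:] * [:-r2 n, 1:] * U n" for n
    using Q(1)[of n] U(1)[of n] by (simp only: mult.assoc)
  ultimately show ?thesis
    using r1 r2 U(2) \<open>N \<ge> 2\<close> by (intro exI[of _ r1] exI[of _ r2] exI[of _ U]) simp
qed

section \<open>The second iterate of \<open>p\<^sub>c\<close> as a polynomial\<close>

fun pc_iter2_poly :: "nat \<Rightarrow> complex \<Rightarrow> complex \<Rightarrow> nat \<Rightarrow> complex poly" where
  "pc_iter2_poly d c z0 0 = [:z0, 1:]"
| "pc_iter2_poly d c z0 (Suc j) = [:c:] + ([:cnj c:] + pc_iter2_poly d c z0 j ^ d) ^ d"

lemma pc_pc_eq: "pc d c (pc d c y) = (y ^ d + cnj c) ^ d + c"
  by (simp add: pc_def)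

lemma poly_pc_iter2_poly: "poly (pc_iter2_poly d c z0 j) w = (pc d c ^^ (2 * j)) (z0 + w)"
  by (induction j) (simp_all add: pc_pc_eq add.commute)

lemma monic_const_plus_power:
  fixes p :: "'a::idom poly"
  assumes "lead_coeff p = 1" "degree p > 0" "d > 0"
  shows "lead_coeff ([:c:] + p ^ d) = 1 \<and> degree ([:c:] + p ^ d) = d * degree p"
proof -
  have "p \<noteq> 0" using assms(1) by auto
  hence deg: "degree (p ^ d) = d * degree p" by (simp add: degree_power_eq)
  hence pos: "degree [:c:] < degree (p ^ d)" using assms(2,3) by simp
  have "lead_coeff (p ^ d) = 1" using assms(1) by (simp add: lead_coeff_power)
  show ?thesis
    using lead_coeff_add_le[OF pos] degree_add_eq_right[OF pos] deg \<open>lead_coeff (p ^ d) = 1\<close>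
    by simp
qed

lemma monic_pc_iter2_poly:
  assumes "d > 0"
  shows "lead_coeff (pc_iter2_poly d c z0 j) = 1 \<and> degree (pc_iter2_poly d c z0 j) = d ^ (2 * j)"
proof (induction j)
  case (Suc j)
  let ?Y = "pc_iter2_poly d c z0 j"
  let ?Z = "[:cnj c:] + ?Y ^ d"
  have Y: "lead_coeff ?Y = 1" "degree ?Y = d ^ (2 * j)"
    using Suc.IH by blast+
  have "degree ?Y > 0" using Y(2) assms by simp
  note Z = monic_const_plus_power[OF Y(1) this assms, of "cnj c"]
  have "degree ?Z > 0" using Z Y(2) assms by simp
  have deg: "d * degree ?Z = d ^ (2 * Suc j)" using Z Y(2) by (simp add: power_Suc)
  from monic_const_plus_power[OF conjunct1[OF Z] \<open>degree ?Z > 0\<close> assms, of c]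
  show ?case unfolding pc_iter2_poly.simps deg .
qed simp

lemma coeffs_tendsto_pc_iter2_poly:
  assumes "c \<longlonglongrightarrow> c0"
  shows "coeffs_tendsto (\<lambda>n. pc_iter2_poly d (c n) z0 j) (coeff (pc_iter2_poly d c0 z0 j))"
proof (induction j)
  case (Suc j)
  show ?case unfolding pc_iter2_poly.simps
    by (intro coeffs_tendsto_add coeffs_tendsto_pConst coeffs_tendsto_power Suc assms tendsto_cnj)
qed (simp add: coeffs_tendsto_const)

lemma mult2_eq_poly_pderiv: "mult2 d c k x = poly (pderiv (pc_iter2_poly d c z0 k)) (x - z0)"
proof -
  have "pc d c ^^ (2 * k) = (\<lambda>x. poly (pc_iter2_poly d c z0 k) (x - z0))"
    by (simp add: poly_pc_iter2_poly)
  moreover have "((\<lambda>x. poly (pc_iter2_poly d c z0 k) (x - z0)) has_field_derivative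
      poly (pderiv (pc_iter2_poly d c z0 k)) (x - z0) * 1) (at x)"
    by (rule DERIV_chain2[OF poly_DERIV]) (auto intro!: derivative_eq_intros)
  ultimately show ?thesis unfolding mult2_def by (simp add: DERIV_imp_deriv)
qed

text \<open>For \<open>k = 2j + 1\<close>, \<open>p\<^sub>c\<^sup>k = conj \<circ> h\<close> with \<open>h(y) = p\<^sub>c\<^sup>2\<^sup>j(y)\<^sup>d + conj c\<close> holomorphic, so
  \<open>p\<^sub>c\<^sup>2\<^sup>k = (conj \<circ> h \<circ> conj) \<circ> h\<close> and the chain rule applies.\<close>
lemma mult2_odd_eq_cnj_mult:
  assumes "odd k"
  shows "\<exists>H. \<forall>x. mult2 d c k x = cnj (H ((pc d c ^^ k) x)) * H x"
proof -
  obtain j where k: "k = Suc (2 * j)" using assms by (elim oddE) simp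
  define hp where "hp = pc_iter2_poly d c 0 j ^ d + [:cnj c:]"
  define h where "h y = poly hp y" for y
  define H where "H y = poly (pderiv hp) y" for y
  have pk: "(pc d c ^^ k) y = cnj (h y)" for y
    by (simp add: k h_def hp_def poly_pc_iter2_poly pc_def)
  have dh: "(h has_field_derivative H y) (at y)" for y
    unfolding h_def H_def by (rule poly_DERIV)
  have "pc d c ^^ (2 * k) = (cnj \<circ> h \<circ> cnj) \<circ> h"
    by (rule ext) (simp add: mult_2 funpow_add pk)
  moreover have "(((cnj \<circ> h \<circ> cnj) \<circ> h) has_field_derivative cnj (H (cnj (h x))) * H x) (at x)" for x
    by (rule DERIV_chain[OF has_field_derivative_cnj_cnj[OF dh] dh])
  ultimately have "mult2 d c k x = cnj (H ((pc d c ^^ k) x)) * H x" for x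
    unfolding mult2_def by (simp add: DERIV_imp_deriv pk)
  thus ?thesis by blast
qed

lemma pc_funpow_tendsto:
  assumes "c \<longlonglongrightarrow> c0" "x \<longlonglongrightarrow> x0"
  shows "(\<lambda>n. (pc d (c n) ^^ m) (x n)) \<longlonglongrightarrow> (pc d c0 ^^ m) x0"
proof (induction m)
  case (Suc m)
  have "(\<lambda>n. cnj ((pc d (c n) ^^ m) (x n)) ^ d + c n) \<longlonglongrightarrow> cnj ((pc d c0 ^^ m) x0) ^ d + c0"
    by (intro tendsto_intros Suc assms(1))
  thus ?case by (simp add: pc_def)
qed (use assms(2) in simp)

definition pc_displacement_poly :: "nat \<Rightarrow> complex \<Rightarrow> complex \<Rightarrow> nat \<Rightarrow> complex poly" where
  "pc_displacement_poly d c z0 k = pc_iter2_poly d c z0 k - [:z0, 1:]"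

lemma poly_pc_displacement_poly:
  "poly (pc_displacement_poly d c z0 k) w = (pc d c ^^ (2 * k)) (z0 + w) - (z0 + w)"
  by (simp add: pc_displacement_poly_def poly_pc_iter2_poly)

lemma monic_pc_displacement_poly:
  assumes "d \<ge> 2" "k > 0"
  shows "lead_coeff (pc_displacement_poly d c z0 k) = 1 \<and>
         degree (pc_displacement_poly d c z0 k) = d ^ (2 * k)"
proof -
  have "d > 0" using assms(1) by simp
  hence H: "lead_coeff (pc_iter2_poly d c z0 k) = 1" "degree (pc_iter2_poly d c z0 k) = d ^ (2 * k)"
    using monic_pc_iter2_poly by blast+
  have "d \<le> d ^ (2 * k)" using assms by (intro self_le_power) auto
  hence lin: "degree (- [:z0, 1:]) < degree (pc_iter2_poly d c z0 k)"
    using H(2) assms(1) by simp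
  have eq: "pc_displacement_poly d c z0 k = - [:z0, 1:] + pc_iter2_poly d c z0 k"
    by (simp add: pc_displacement_poly_def)
  show ?thesis
    unfolding eq using lead_coeff_add_le[OF lin] degree_add_eq_right[OF lin] H by simp
qed

lemma mult2_eq_1_plus_pderiv_displacement:
  "mult2 d c k (z0 + w) = 1 + poly (pderiv (pc_displacement_poly d c z0 k)) w"
  by (simp add: mult2_eq_poly_pderiv[of d c k "z0 + w" z0] pc_displacement_poly_def pderiv_diff pderiv_pCons)

lemma coeffs_tendsto_pc_displacement_poly:
  "c \<longlonglongrightarrow> c0 \<Longrightarrow>
   coeffs_tendsto (\<lambda>n. pc_displacement_poly d (c n) z0 k) (coeff (pc_displacement_poly d c0 z0 k))"
  unfolding pc_displacement_poly_def
  by (intro coeffs_tendsto_diff coeffs_tendsto_pc_iter2_poly coeffs_tendsto_const)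

lemma simple_parabolic_displacement_coeffs:
  assumes "simple_parabolic d c0 k z0"
  obtains a where "a \<noteq> 0" "coeff (pc_displacement_poly d c0 z0 k) 0 = 0"
    "coeff (pc_displacement_poly d c0 z0 k) 1 = 0" "coeff (pc_displacement_poly d c0 z0 k) 2 = a"
proof -
  obtain a where "a \<noteq> 0"
    and bigo: "(\<lambda>w. (pc d c0 ^^ (2 * k)) (z0 + w) - (z0 + w + a * w ^ 2)) \<in> O[at 0](\<lambda>w. w ^ 3)"
    using assms unfolding simple_parabolic_def by blast
  define P where "P = pc_displacement_poly d c0 z0 k - [:0, 0, a:]"
  have "(\<lambda>w. poly P w) = (\<lambda>w. (pc d c0 ^^ (2 * k)) (z0 + w) - (z0 + w + a * w ^ 2))"
    by (simp add: P_def poly_pc_displacement_poly algebra_simps power2_eq_square)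
  hence "coeff P i = 0" if "i < 3" for i
    using coeff_eq_0_if_bigo_power[OF _ that] bigo by simp
  hence "coeff (pc_displacement_poly d c0 z0 k) 0 = 0" "coeff (pc_displacement_poly d c0 z0 k) 1 = 0"
    "coeff (pc_displacement_poly d c0 z0 k) 2 = a"
    by (simp_all add: P_def numeral_2_eq_2)
  with \<open>a \<noteq> 0\<close> show ?thesis by (rule that)
qed

section \<open>Fixed points of \<open>p\<^sub>c\<^sup>2\<^sup>k\<close> and their multipliers\<close>

lemma opposite_signs_if_inverse_sum_small:
  fixes s t M :: real
  assumes "s \<noteq> 0" "t \<noteq> 0" "\<bar>s\<bar> < 1 / M" "\<bar>t\<bar> < 1 / M" "\<bar>1 / s + 1 / t\<bar> < M"
  shows "s < 0 \<and> 0 < t \<or> 0 < s \<and> t < 0"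
proof (rule ccontr)
  assume same_sign: "\<not> ?thesis"
  have "0 < \<bar>s\<bar>" using assms(1) by simp
  hence "M > 0" using assms(3) by (metis less_trans zero_less_divide_1_iff)
  hence "M < 1 / \<bar>s\<bar>" "0 < 1 / \<bar>t\<bar>" using assms(1-3) by (simp_all add: field_simps)
  moreover have "\<bar>1 / s + 1 / t\<bar> = 1 / \<bar>s\<bar> + 1 / \<bar>t\<bar>"
  proof (cases "s > 0")
    case True
    with same_sign assms(2) have "1 / s > 0" "1 / t > 0" by auto
    with True show ?thesis by (simp add: abs_of_pos)
  next
    case False
    with same_sign assms(1,2) have "s < 0" "t < 0" by auto
    hence "1 / s + 1 / t < 0" by (simp add: add_neg_neg)
    with \<open>s < 0\<close> \<open>t < 0\<close> show ?thesis by (subst abs_of_neg) simp_all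
  qed
  ultimately show False using assms(5) by linarith
qed

lemma inverse_add_inverse_cnj:
  fixes X :: complex
  assumes "X \<noteq> 0"
  shows "1 / X + 1 / cnj X = of_real (2 * Re X / (norm X)\<^sup>2)"
proof -
  have "1 / X + 1 / cnj X = (X + cnj X) / (X * cnj X)" using assms by (simp add: field_simps)
  also have "X + cnj X = of_real (2 * Re X)" by (simp add: complex_add_cnj)
  also have "X * cnj X = of_real ((norm X)\<^sup>2)" by (simp add: complex_mult_cnj cmod_def)
  finally show ?thesis by simp
qed

lemma Re_le_Im_sq_if_inverse_sum_small:
  fixes X :: complex and M :: real
  assumes "X \<noteq> 0" "norm X < 1 / M" "norm (1 / X + 1 / cnj X) < M"
  shows "X \<notin> \<real> \<and> \<bar>Re X\<bar> \<le> M * (Im X)\<^sup>2"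
proof -
  have "M > 0" using assms(1,2) by (metis less_trans zero_less_divide_1_iff zero_less_norm_iff)
  have "norm (1 / X + 1 / cnj X) = 2 * \<bar>Re X\<bar> / (norm X)\<^sup>2"
    unfolding inverse_add_inverse_cnj[OF assms(1)] norm_of_real by (simp add: abs_divide abs_mult)
  moreover have "0 < (norm X)\<^sup>2" using assms(1) by simp
  ultimately have "2 * \<bar>Re X\<bar> < M * (norm X)\<^sup>2" using assms(3) by (simp add: divide_less_eq)
  hence "2 * \<bar>Re X\<bar> < M * (Re X)\<^sup>2 + M * (Im X)\<^sup>2" by (simp add: cmod_power2 distrib_left)
  moreover have "M * (Re X)\<^sup>2 \<le> \<bar>Re X\<bar>"
  proof -
    have "M * \<bar>Re X\<bar> \<le> M * norm X" using abs_Re_le_cmod[of X] \<open>M > 0\<close> by simp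
    also have "\<dots> < 1" using assms(2) \<open>M > 0\<close> by (simp add: field_simps)
    finally have "M * \<bar>Re X\<bar> * \<bar>Re X\<bar> \<le> 1 * \<bar>Re X\<bar>"
      by (intro mult_right_mono) auto
    thus ?thesis by (simp add: power2_eq_square abs_mult_self mult.assoc)
  qed
  ultimately have bound: "\<bar>Re X\<bar> \<le> M * (Im X)\<^sup>2" by linarith
  moreover have "X \<notin> \<real>"
  proof
    assume "X \<in> \<real>"
    hence "Im X = 0" by (simp add: complex_is_Real_iff)
    with bound have "Re X = 0" by simp
    with \<open>Im X = 0\<close> assms(1) show False by (simp add: complex_eq_iff)
  qed
  ultimately show ?thesis by blast
qed

lemma norm_inverse_add_inverse_le:
  fixes e u1 u2 :: "'a::real_normed_field"
  assumes "e \<noteq> 0" "m > 0" "norm u1 \<ge> m" "norm u2 \<ge> m" "norm (u1 - u2) \<le> L * norm e"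
  shows "norm (1 / (e * u1) + 1 / (- e * u2)) \<le> L / m\<^sup>2"
proof -
  have "u1 \<noteq> 0" "u2 \<noteq> 0" using assms(2-4) by auto
  hence "1 / (e * u1) + 1 / (- e * u2) = (u2 - u1) / (e * (u1 * u2))"
    using assms(1) by (simp add: field_simps)
  also have "norm \<dots> = norm (u1 - u2) / (norm e * (norm u1 * norm u2))"
    by (simp add: norm_divide norm_mult norm_minus_commute)
  also have "\<dots> \<le> L * norm e / (norm e * m\<^sup>2)"
    using assms order_trans[OF norm_ge_zero assms(5)]
    by (intro frac_le mult_left_mono) (auto simp: power2_eq_square intro: mult_mono)
  also have "\<dots> = L / m\<^sup>2" using assms(1) by simp
  finally show ?thesis .
qed

lemma funpow_double_fix_or_swap:
  assumes fx: "(f ^^ (2 * k)) x = x" and fy: "(f ^^ (2 * k)) y = y"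
    and uniq: "\<And>v. (f ^^ (2 * k)) v = v \<Longrightarrow> v \<in> S \<Longrightarrow> v = x \<or> v = y"
    and "(f ^^ k) x \<in> S" "(f ^^ k) y \<in> S"
  shows "(f ^^ k) x = x \<and> (f ^^ k) y = y \<or> (f ^^ k) x = y \<and> (f ^^ k) y = x"
proof -
  have twice: "(f ^^ k) ((f ^^ k) u) = (f ^^ (2 * k)) u" for u
    by (simp add: mult_2 funpow_add)
  have "(f ^^ (2 * k)) ((f ^^ k) u) = (f ^^ k) u" if "(f ^^ (2 * k)) u = u" for u
    using that by (metis twice funpow_swap1[of "f ^^ k"])
  hence images: "(f ^^ k) x = x \<or> (f ^^ k) x = y" "(f ^^ k) y = x \<or> (f ^^ k) y = y"
    using uniq fx fy assms(4,5) by blast+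
  show ?thesis using images twice[of x] twice[of y] fx fy by auto
qed

lemma mult2_real_nonneg_if_fixed:
  assumes "odd k" "(pc d c ^^ k) x = x"
  shows "\<exists>r\<ge>0. mult2 d c k x = of_real r"
proof -
  obtain H where "\<And>u. mult2 d c k u = cnj (H ((pc d c ^^ k) u)) * H u"
    using mult2_odd_eq_cnj_mult[OF assms(1)] by blast
  hence "mult2 d c k x = of_real ((norm (H x))\<^sup>2)"
    unfolding complex_norm_square using assms(2) by (simp add: mult.commute)
  thus ?thesis by (intro exI[of _ "(norm (H x))\<^sup>2"]) simp
qed

lemma mult2_cnj_if_swapped:
  assumes "odd k" "(pc d c ^^ k) x = y" "(pc d c ^^ k) y = x"
  shows "mult2 d c k y = cnj (mult2 d c k x)"
proof -
  obtain H where "\<And>u. mult2 d c k u = cnj (H ((pc d c ^^ k) u)) * H u"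
    using mult2_odd_eq_cnj_mult[OF assms(1)] by blast
  thus ?thesis using assms(2,3) by (simp add: mult.commute)
qed

lemma mult2_attracting_repelling_if_fixed:
  assumes "odd k" "(pc d c ^^ k) x = x" "(pc d c ^^ k) y = y"
    and "mult2 d c k x \<noteq> 1" "mult2 d c k y \<noteq> 1"
    and "norm (1 - mult2 d c k x) < 1 / M" "norm (1 - mult2 d c k y) < 1 / M"
    and index: "norm (1 / (1 - mult2 d c k x) + 1 / (1 - mult2 d c k y)) < M"
  shows "mult2 d c k x \<in> \<real>" "mult2 d c k y \<in> \<real>"
    "norm (mult2 d c k x) < 1 \<and> norm (mult2 d c k y) > 1 \<or>
     norm (mult2 d c k x) > 1 \<and> norm (mult2 d c k y) < 1"
proof -
  obtain \<rho> \<rho>' where \<rho>: "\<rho> \<ge> 0" "mult2 d c k x = of_real \<rho>"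
    and \<rho>': "\<rho>' \<ge> 0" "mult2 d c k y = of_real \<rho>'"
    using mult2_real_nonneg_if_fixed[OF assms(1,2)] mult2_real_nonneg_if_fixed[OF assms(1,3)] by blast
  thus "mult2 d c k x \<in> \<real>" "mult2 d c k y \<in> \<real>" by simp_all
  have eq: "1 - mult2 d c k x = of_real (1 - \<rho>)" "1 - mult2 d c k y = of_real (1 - \<rho>')"
    using \<rho> \<rho>' by simp_all
  have idx_eq: "1 / (1 - mult2 d c k x) + 1 / (1 - mult2 d c k y) = of_real (1 / (1 - \<rho>) + 1 / (1 - \<rho>'))"
    unfolding eq by simp
  have "1 - \<rho> \<noteq> 0" "1 - \<rho>' \<noteq> 0" using assms(4,5) \<rho> \<rho>' by auto
  moreover have "\<bar>1 - \<rho>\<bar> < 1 / M" "\<bar>1 - \<rho>'\<bar> < 1 / M"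
    using assms(6,7) unfolding eq norm_of_real .
  moreover have "\<bar>1 / (1 - \<rho>) + 1 / (1 - \<rho>')\<bar> < M"
    using index unfolding idx_eq norm_of_real .
  ultimately have "1 - \<rho> < 0 \<and> 0 < 1 - \<rho>' \<or> 0 < 1 - \<rho> \<and> 1 - \<rho>' < 0"
    by (rule opposite_signs_if_inverse_sum_small)
  thus "norm (mult2 d c k x) < 1 \<and> norm (mult2 d c k y) > 1 \<or>
        norm (mult2 d c k x) > 1 \<and> norm (mult2 d c k y) < 1"
    using \<rho> \<rho>' by auto
qed

lemma mult2_conjugate_nonreal_if_swapped:
  assumes "odd k" "(pc d c ^^ k) x = y" "(pc d c ^^ k) y = x"
    and "mult2 d c k x \<noteq> 1" "norm (1 - mult2 d c k x) < 1 / M"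
    and index: "norm (1 / (1 - mult2 d c k x) + 1 / (1 - mult2 d c k y)) < M"
  shows "mult2 d c k y = cnj (mult2 d c k x)" "mult2 d c k x \<notin> \<real>"
    "\<bar>Re (mult2 d c k x - 1)\<bar> \<le> M * (Im (mult2 d c k x))\<^sup>2"
proof -
  show conj: "mult2 d c k y = cnj (mult2 d c k x)"
    using mult2_cnj_if_swapped[OF assms(1-3)] .
  define X where "X = 1 - mult2 d c k x"
  have "X \<noteq> 0" "norm X < 1 / M" using assms(4,5) by (simp_all add: X_def)
  moreover have "norm (1 / X + 1 / cnj X) < M" using index conj by (simp add: X_def)
  ultimately have "X \<notin> \<real> \<and> \<bar>Re X\<bar> \<le> M * (Im X)\<^sup>2"
    by (rule Re_le_Im_sq_if_inverse_sum_small)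
  note X = conjunct1[OF this] conjunct2[OF this]
  show "mult2 d c k x \<notin> \<real>"
  proof
    assume "mult2 d c k x \<in> \<real>"
    hence "X \<in> \<real>" unfolding X_def by (intro Reals_diff Reals_1)
    with X(1) show False ..
  qed
  show "\<bar>Re (mult2 d c k x - 1)\<bar> \<le> M * (Im (mult2 d c k x))\<^sup>2"
    using X(2) by (simp add: X_def abs_minus_commute)
qed

definition pc_bifurcation_cases :: "nat \<Rightarrow> complex \<Rightarrow> nat \<Rightarrow> real \<Rightarrow> complex \<Rightarrow> complex \<Rightarrow> bool" where
  "pc_bifurcation_cases d c k C x y \<longleftrightarrow>
     (\<exists>m. has_period (pc d c) m x) \<and> (\<exists>m. has_period (pc d c) m y) \<and>
     ( (has_period (pc d c) k x \<and> has_period (pc d c) k y \<and>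
        mult2 d c k x \<in> \<real> \<and> mult2 d c k y \<in> \<real> \<and>
        ((norm (mult2 d c k x) < 1 \<and> norm (mult2 d c k y) > 1) \<or>
         (norm (mult2 d c k x) > 1 \<and> norm (mult2 d c k y) < 1)))
     \<or> (x = y \<and> parabolic d c k x)
     \<or> (has_period (pc d c) (2 * k) x \<and> has_period (pc d c) (2 * k) y \<and>
        (pc d c ^^ k) x = y \<and> (pc d c ^^ k) y = x \<and>
        mult2 d c k y = cnj (mult2 d c k x) \<and>
        mult2 d c k x \<notin> \<real> \<and>
        \<bar>Re (mult2 d c k x - 1)\<bar> \<le> C * (Im (mult2 d c k x))\<^sup>2))"

lemma pc_bifurcation_cases_attracting_repelling:
  assumes "has_period (pc d c) k x" "has_period (pc d c) k y"
    "mult2 d c k x \<in> \<real>" "mult2 d c k y \<in> \<real>"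
    "norm (mult2 d c k x) < 1 \<and> norm (mult2 d c k y) > 1 \<or>
     norm (mult2 d c k x) > 1 \<and> norm (mult2 d c k y) < 1"
  shows "pc_bifurcation_cases d c k C x y"
  unfolding pc_bifurcation_cases_def
proof (intro conjI)
  show "\<exists>m. has_period (pc d c) m x" "\<exists>m. has_period (pc d c) m y"
    using assms(1,2) by blast+
qed (rule disjI1, intro conjI assms)

lemma pc_bifurcation_cases_parabolic:
  assumes "parabolic d c k x"
  shows "pc_bifurcation_cases d c k C x x"
proof -
  have "\<exists>m. has_period (pc d c) m x" using assms by (auto simp: parabolic_def)
  thus ?thesis unfolding pc_bifurcation_cases_def using assms by simp
qed

lemma pc_bifurcation_cases_conjugate:
  assumes "has_period (pc d c) (2 * k) x" "has_period (pc d c) (2 * k) y"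
    "(pc d c ^^ k) x = y" "(pc d c ^^ k) y = x"
    "mult2 d c k y = cnj (mult2 d c k x)" "mult2 d c k x \<notin> \<real>"
    "\<bar>Re (mult2 d c k x - 1)\<bar> \<le> C * (Im (mult2 d c k x))\<^sup>2"
  shows "pc_bifurcation_cases d c k C x y"
  unfolding pc_bifurcation_cases_def
proof (intro conjI)
  show "\<exists>m. has_period (pc d c) m x" "\<exists>m. has_period (pc d c) m y"
    using assms(1,2) by blast+
qed (rule disjI2, rule disjI2, intro conjI assms)

definition pc_fixed_pair :: "nat \<Rightarrow> complex \<Rightarrow> nat \<Rightarrow> complex set \<Rightarrow> real \<Rightarrow> complex \<Rightarrow> complex \<Rightarrow> bool" where
  "pc_fixed_pair d c k S M x y \<longleftrightarrow>
     (pc d c ^^ (2 * k)) x = x \<and> (pc d c ^^ (2 * k)) y = y \<and>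
     (\<forall>v\<in>S. (pc d c ^^ (2 * k)) v = v \<longrightarrow> v = x \<or> v = y) \<and>
     (x = y \<longrightarrow> mult2 d c k x = 1) \<and>
     (x \<noteq> y \<longrightarrow> mult2 d c k x \<noteq> 1 \<and> mult2 d c k y \<noteq> 1 \<and>
        norm (1 / (1 - mult2 d c k x) + 1 / (1 - mult2 d c k y)) < M)"

lemma pc_bifurcation_cases_if_fixed:
  assumes "odd k" "(pc d c ^^ k) x = x" "(pc d c ^^ k) y = y"
    and return_x: "\<And>i. 0 < i \<Longrightarrow> i < 2 * k \<Longrightarrow> i \<noteq> k \<Longrightarrow> (pc d c ^^ i) x \<noteq> x"
    and return_y: "\<And>i. 0 < i \<Longrightarrow> i < 2 * k \<Longrightarrow> i \<noteq> k \<Longrightarrow> (pc d c ^^ i) y \<noteq> y"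
    and merged: "x = y \<Longrightarrow> mult2 d c k x = 1"
    and split: "x \<noteq> y \<Longrightarrow> mult2 d c k x \<noteq> 1 \<and> mult2 d c k y \<noteq> 1 \<and>
                 norm (1 / (1 - mult2 d c k x) + 1 / (1 - mult2 d c k y)) < M"
    and small: "norm (1 - mult2 d c k x) < 1 / M" "norm (1 - mult2 d c k y) < 1 / M"
  shows "pc_bifurcation_cases d c k M x y"
proof -
  have "k > 0" using \<open>odd k\<close> by (rule odd_pos)
  hence per: "has_period (pc d c) k x" "has_period (pc d c) k y"
    using assms(2,3) return_x return_y unfolding has_period_def by auto
  show ?thesis
  proof (cases "x = y")
    case True
    hence "parabolic d c k x" using per merged \<open>odd k\<close> by (simp add: parabolic_def)
    thus ?thesis using True by (simp add: pc_bifurcation_cases_parabolic)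
  next
    case False
    from split[OF False] have "mult2 d c k x \<noteq> 1" "mult2 d c k y \<noteq> 1"
      and index: "norm (1 / (1 - mult2 d c k x) + 1 / (1 - mult2 d c k y)) < M"
      by blast+
    from mult2_attracting_repelling_if_fixed[OF \<open>odd k\<close> assms(2,3) this(1,2) small index]
    show ?thesis by (rule pc_bifurcation_cases_attracting_repelling[OF per])
  qed
qed

lemma pc_bifurcation_cases_if_swapped:
  assumes "odd k" "(pc d c ^^ k) x = y" "(pc d c ^^ k) y = x" "x \<noteq> y"
    and return_x: "\<And>i. 0 < i \<Longrightarrow> i < 2 * k \<Longrightarrow> i \<noteq> k \<Longrightarrow> (pc d c ^^ i) x \<noteq> x"
    and return_y: "\<And>i. 0 < i \<Longrightarrow> i < 2 * k \<Longrightarrow> i \<noteq> k \<Longrightarrow> (pc d c ^^ i) y \<noteq> y"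
    and "mult2 d c k x \<noteq> 1" "norm (1 - mult2 d c k x) < 1 / M"
    and index: "norm (1 / (1 - mult2 d c k x) + 1 / (1 - mult2 d c k y)) < M"
  shows "pc_bifurcation_cases d c k M x y"
proof -
  have "k > 0" using \<open>odd k\<close> by (rule odd_pos)
  have per2: "has_period (pc d c) (2 * k) u"
    if "(pc d c ^^ k) ((pc d c ^^ k) u) = u" "(pc d c ^^ k) u \<noteq> u"
      "\<And>i. 0 < i \<Longrightarrow> i < 2 * k \<Longrightarrow> i \<noteq> k \<Longrightarrow> (pc d c ^^ i) u \<noteq> u" for u
    using that \<open>k > 0\<close> unfolding has_period_def by (auto simp: mult_2 funpow_add)
  have per: "has_period (pc d c) (2 * k) x" "has_period (pc d c) (2 * k) y"
    using per2[OF _ _ return_x] per2[OF _ _ return_y] assms(2-4) by auto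
  from mult2_conjugate_nonreal_if_swapped[OF assms(1-3) assms(7,8) index]
  show ?thesis by (rule pc_bifurcation_cases_conjugate[OF per assms(2,3)])
qed

lemma pc_bifurcation_cases_if_fixed_pair:
  assumes pair: "pc_fixed_pair d c k S M x y" and "odd k"
    and orbit: "(pc d c ^^ k) x \<in> S" "(pc d c ^^ k) y \<in> S"
    and return_x: "\<And>i. 0 < i \<Longrightarrow> i < 2 * k \<Longrightarrow> i \<noteq> k \<Longrightarrow> (pc d c ^^ i) x \<noteq> x"
    and return_y: "\<And>i. 0 < i \<Longrightarrow> i < 2 * k \<Longrightarrow> i \<noteq> k \<Longrightarrow> (pc d c ^^ i) y \<noteq> y"
    and small: "norm (1 - mult2 d c k x) < 1 / M" "norm (1 - mult2 d c k y) < 1 / M"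
  shows "pc_bifurcation_cases d c k M x y"
proof -
  have fx: "(pc d c ^^ (2 * k)) x = x" and fy: "(pc d c ^^ (2 * k)) y = y"
    and uniq: "\<forall>v\<in>S. (pc d c ^^ (2 * k)) v = v \<longrightarrow> v = x \<or> v = y"
    and merged: "x = y \<Longrightarrow> mult2 d c k x = 1"
    and split: "x \<noteq> y \<Longrightarrow> mult2 d c k x \<noteq> 1 \<and> mult2 d c k y \<noteq> 1 \<and>
                 norm (1 / (1 - mult2 d c k x) + 1 / (1 - mult2 d c k y)) < M"
    using pair unfolding pc_fixed_pair_def by blast+
  have "(pc d c ^^ k) x = x \<and> (pc d c ^^ k) y = y \<or> (pc d c ^^ k) x = y \<and> (pc d c ^^ k) y = x"
    using uniq orbit by (intro funpow_double_fix_or_swap[where S = S, OF fx fy]) auto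
  then consider (stay) "(pc d c ^^ k) x = x" "(pc d c ^^ k) y = y"
    | (swap) "(pc d c ^^ k) x = y" "(pc d c ^^ k) y = x" "x \<noteq> y"
    by blast
  thus ?thesis
  proof cases
    case stay
    show ?thesis
      by (rule pc_bifurcation_cases_if_fixed[OF \<open>odd k\<close> stay return_x return_y merged split small])
  next
    case swap
    from split[OF swap(3)] have "mult2 d c k x \<noteq> 1"
      and index: "norm (1 / (1 - mult2 d c k x) + 1 / (1 - mult2 d c k y)) < M"
      by blast+
    with pc_bifurcation_cases_if_swapped[OF \<open>odd k\<close> swap return_x return_y _ small(1)]
    show ?thesis by blast
  qed
qed

section \<open>Perturbing a simple parabolic point\<close>

lemma pc_displacement_two_small_roots:
  assumes "d \<ge> 2" "simple_parabolic d c0 k z0" "c \<longlonglongrightarrow> c0"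
  obtains r1 r2 \<delta> m L U K where "r1 \<longlonglongrightarrow> 0" "r2 \<longlonglongrightarrow> 0" "\<delta> > 0" "m > 0" "L \<ge> 0"
    "\<And>n. pc_displacement_poly d (c n) z0 k = [:-r1 n, 1:] * [:-r2 n, 1:] * U n"
    "eventually (\<lambda>n. \<forall>w. norm w \<le> \<delta> \<longrightarrow> m \<le> norm (poly (U n) w)) sequentially"
    "eventually (\<lambda>n. \<forall>w. norm w \<le> \<delta> \<longrightarrow> norm (poly (U n) w) \<le> K) sequentially"
    "eventually (\<lambda>n. \<forall>w w'. norm w \<le> \<delta> \<longrightarrow> norm w' \<le> \<delta> \<longrightarrow>
       norm (poly (U n) w - poly (U n) w') \<le> L * norm (w - w')) sequentially"
proof -
  have "k > 0" using assms(2) by (simp add: simple_parabolic_def parabolic_def has_period_def)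
  define G where "G n = pc_displacement_poly d (c n) z0 k" for n
  define g where "g = coeff (pc_displacement_poly d c0 z0 k)"
  obtain a where "a \<noteq> 0" "g 0 = 0" "g 1 = 0" "g 2 = a"
    using simple_parabolic_displacement_coeffs[OF assms(2)] unfolding g_def by metis
  have lc: "\<And>n. lead_coeff (G n) = 1" and deg_G: "\<And>n. degree (G n) = d ^ (2 * k)"
    using monic_pc_displacement_poly[OF assms(1) \<open>k > 0\<close>] unfolding G_def by blast+
  have "d \<le> d ^ (2 * k)" using assms(1) \<open>k > 0\<close> by (intro self_le_power) auto
  hence N2: "2 \<le> d ^ (2 * k)" using assms(1) by linarith
  have GT: "coeffs_tendsto G g"
    unfolding G_def g_def by (rule coeffs_tendsto_pc_displacement_poly[OF assms(3)])
  from monic_polys_split_two_vanishing_roots[of G "d ^ (2 * k)" g, OF lc deg_G N2 GT \<open>g 0 = 0\<close> \<open>g 1 = 0\<close>]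
  obtain r1 r2 U where r: "r1 \<longlonglongrightarrow> 0" "r2 \<longlonglongrightarrow> 0"
    and U: "coeffs_tendsto U (\<lambda>i. g (Suc (Suc i)))"
    and fac: "\<And>n. G n = [:-r1 n, 1:] * [:-r2 n, 1:] * U n" and deg: "\<And>n. degree (U n) < d ^ (2 * k)"
    by blast
  have "g (Suc (Suc 0)) \<noteq> 0" using \<open>g 2 = a\<close> \<open>a \<noteq> 0\<close> by (simp add: numeral_2_eq_2)
  with eventually_poly_bounds_near_0[OF deg U]
  obtain \<delta> L K where "\<delta> > 0" "L \<ge> 0"
    and lower: "eventually (\<lambda>n. \<forall>w. norm w \<le> \<delta> \<longrightarrow> norm (g (Suc (Suc 0))) / 2 \<le> norm (poly (U n) w)) sequentially"
    and upper: "eventually (\<lambda>n. \<forall>w. norm w \<le> \<delta> \<longrightarrow> norm (poly (U n) w) \<le> K) sequentially"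
    and lip: "eventually (\<lambda>n. \<forall>w w'. norm w \<le> \<delta> \<longrightarrow> norm w' \<le> \<delta> \<longrightarrow>
       norm (poly (U n) w - poly (U n) w') \<le> L * norm (w - w')) sequentially"
    by blast
  moreover have "norm (g (Suc (Suc 0))) / 2 > 0" using \<open>g (Suc (Suc 0)) \<noteq> 0\<close> by simp
  ultimately show ?thesis
    using that[OF r \<open>\<delta> > 0\<close> _ \<open>L \<ge> 0\<close> fac[unfolded G_def]] by blast
qed

lemma mult2_eq_if_displacement_factors:
  assumes "pc_displacement_poly d c z0 k = [:-r1, 1:] * [:-r2, 1:] * U"
  shows "mult2 d c k (z0 + r1) = 1 + (r1 - r2) * poly U r1"
  using mult2_eq_1_plus_pderiv_displacement[of d c k z0 r1]
  unfolding assms pderiv_two_linear_factors_at_root .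

lemma pc_fixed_pair_if_displacement_factors:
  assumes fac: "pc_displacement_poly d c z0 k = [:-r1, 1:] * [:-r2, 1:] * U"
    and "norm r1 \<le> \<delta>" "norm r2 \<le> \<delta>" "m > 0" "L / m\<^sup>2 < M"
    and lower: "\<forall>w. norm w \<le> \<delta> \<longrightarrow> m \<le> norm (poly U w)"
    and lip: "\<forall>w w'. norm w \<le> \<delta> \<longrightarrow> norm w' \<le> \<delta> \<longrightarrow> norm (poly U w - poly U w') \<le> L * norm (w - w')"
  shows "pc_fixed_pair d c k (ball z0 \<delta>) M (z0 + r1) (z0 + r2)"
proof -
  have disp: "(pc d c ^^ (2 * k)) (z0 + w) - (z0 + w) = (w - r1) * (w - r2) * poly U w" for w
    using poly_pc_displacement_poly[of d c z0 k w] by (simp add: fac algebra_simps)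
  have U_nz: "poly U w \<noteq> 0" if "norm w \<le> \<delta>" for w
    using lower that \<open>m > 0\<close> by (metis norm_zero not_le)
  have fixed: "(pc d c ^^ (2 * k)) (z0 + r1) = z0 + r1" "(pc d c ^^ (2 * k)) (z0 + r2) = z0 + r2"
    using disp[of r1] disp[of r2] by simp_all
  have uniq: "v = z0 + r1 \<or> v = z0 + r2" if "v \<in> ball z0 \<delta>" "(pc d c ^^ (2 * k)) v = v" for v
  proof -
    have "norm (v - z0) \<le> \<delta>" using that(1) by (simp add: dist_norm norm_minus_commute)
    moreover have "(v - z0 - r1) * (v - z0 - r2) * poly U (v - z0) = 0"
      using disp[of "v - z0"] that(2) by simp
    ultimately show ?thesis using U_nz by auto
  qed
  have \<rho>1: "mult2 d c k (z0 + r1) = 1 + (r1 - r2) * poly U r1"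
    by (rule mult2_eq_if_displacement_factors[OF fac])
  have "pc_displacement_poly d c z0 k = [:-r2, 1:] * [:-r1, 1:] * U" by (simp add: fac mult_ac)
  hence \<rho>2: "mult2 d c k (z0 + r2) = 1 + (r2 - r1) * poly U r2"
    by (rule mult2_eq_if_displacement_factors)
  have merged: "mult2 d c k (z0 + r1) = 1" if "z0 + r1 = z0 + r2" using \<rho>1 that by simp
  have split: "mult2 d c k (z0 + r1) \<noteq> 1 \<and> mult2 d c k (z0 + r2) \<noteq> 1 \<and>
      norm (1 / (1 - mult2 d c k (z0 + r1)) + 1 / (1 - mult2 d c k (z0 + r2))) < M"
    if "z0 + r1 \<noteq> z0 + r2"
  proof (intro conjI)
    have "r1 \<noteq> r2" using that by simp
    show "mult2 d c k (z0 + r1) \<noteq> 1" "mult2 d c k (z0 + r2) \<noteq> 1"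
      using \<rho>1 \<rho>2 U_nz assms(2,3) \<open>r1 \<noteq> r2\<close> by auto
    have "norm (1 / ((r2 - r1) * poly U r1) + 1 / (- (r2 - r1) * poly U r2)) \<le> L / m\<^sup>2"
      using lower lip assms(2-4) \<open>r1 \<noteq> r2\<close>
      by (intro norm_inverse_add_inverse_le) (auto simp: norm_minus_commute)
    moreover have "1 - mult2 d c k (z0 + r1) = (r2 - r1) * poly U r1"
      "1 - mult2 d c k (z0 + r2) = - (r2 - r1) * poly U r2"
      using \<rho>1 \<rho>2 by (simp_all add: algebra_simps)
    ultimately show "norm (1 / (1 - mult2 d c k (z0 + r1)) + 1 / (1 - mult2 d c k (z0 + r2))) < M"
      using assms(5) by simp
  qed
  show ?thesis
    unfolding pc_fixed_pair_def using fixed uniq merged split by blast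
qed

lemma mult2_tendsto_1_if_displacement_factors:
  assumes fac: "\<And>n. pc_displacement_poly d (c n) z0 k = [:-r1 n, 1:] * [:-r2 n, 1:] * U n"
    and r: "r1 \<longlonglongrightarrow> 0" "r2 \<longlonglongrightarrow> 0" and bound: "eventually (\<lambda>n. norm (poly (U n) (r1 n)) \<le> K) sequentially"
  shows "(\<lambda>n. mult2 d (c n) k (z0 + r1 n)) \<longlonglongrightarrow> 1"
proof -
  have "(\<lambda>n. (r1 n - r2 n) * poly (U n) (r1 n)) \<longlonglongrightarrow> 0"
  proof (rule Lim_null_comparison)
    show "eventually (\<lambda>n. norm ((r1 n - r2 n) * poly (U n) (r1 n)) \<le> norm (r1 n - r2 n) * K) sequentially"
      using bound by eventually_elim (simp add: norm_mult mult_left_mono)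
    show "(\<lambda>n. norm (r1 n - r2 n) * K) \<longlonglongrightarrow> 0"
      using tendsto_mult_left_zero[OF tendsto_norm_zero[OF tendsto_diff[OF r, simplified]]] by simp
  qed
  hence "(\<lambda>n. 1 + (r1 n - r2 n) * poly (U n) (r1 n)) \<longlonglongrightarrow> 1"
    using tendsto_add[OF tendsto_const, of _ 0 sequentially 1] by simp
  moreover have "mult2 d (c n) k (z0 + r1 n) = 1 + (r1 n - r2 n) * poly (U n) (r1 n)" for n
    by (rule mult2_eq_if_displacement_factors[OF fac])
  ultimately show ?thesis by simp
qed

lemma pc_displacement_fixed_pairs:
  assumes "d \<ge> 2" "simple_parabolic d c0 k z0" "c \<longlonglongrightarrow> c0"
  obtains r1 r2 \<delta> M where "r1 \<longlonglongrightarrow> 0" "r2 \<longlonglongrightarrow> 0" "\<delta> > 0" "M > 0"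
    "eventually (\<lambda>n. pc_fixed_pair d (c n) k (ball z0 \<delta>) M (z0 + r1 n) (z0 + r2 n)) sequentially"
    "(\<lambda>n. mult2 d (c n) k (z0 + r1 n)) \<longlonglongrightarrow> 1" "(\<lambda>n. mult2 d (c n) k (z0 + r2 n)) \<longlonglongrightarrow> 1"
proof -
  obtain r1 r2 \<delta> m L U K where r: "r1 \<longlonglongrightarrow> 0" "r2 \<longlonglongrightarrow> 0" and "\<delta> > 0" "m > 0" "L \<ge> 0"
    and fac: "\<And>n. pc_displacement_poly d (c n) z0 k = [:-r1 n, 1:] * [:-r2 n, 1:] * U n"
    and lower: "eventually (\<lambda>n. \<forall>w. norm w \<le> \<delta> \<longrightarrow> m \<le> norm (poly (U n) w)) sequentially"
    and upper: "eventually (\<lambda>n. \<forall>w. norm w \<le> \<delta> \<longrightarrow> norm (poly (U n) w) \<le> K) sequentially"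
    and lip: "eventually (\<lambda>n. \<forall>w w'. norm w \<le> \<delta> \<longrightarrow> norm w' \<le> \<delta> \<longrightarrow>
       norm (poly (U n) w - poly (U n) w') \<le> L * norm (w - w')) sequentially"
    using pc_displacement_two_small_roots[OF assms] by blast
  define M where "M = L / m\<^sup>2 + 1"
  have "M > 0" using \<open>L \<ge> 0\<close> by (simp add: M_def add_nonneg_pos)
  have "eventually (\<lambda>n. norm (r1 n) < \<delta>) sequentially" "eventually (\<lambda>n. norm (r2 n) < \<delta>) sequentially"
    using order_tendstoD(2)[OF tendsto_norm_zero[OF r(1)] \<open>\<delta> > 0\<close>]
      order_tendstoD(2)[OF tendsto_norm_zero[OF r(2)] \<open>\<delta> > 0\<close>] by simp_all
  hence inside: "eventually (\<lambda>n. norm (r1 n) \<le> \<delta>) sequentially"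
    "eventually (\<lambda>n. norm (r2 n) \<le> \<delta>) sequentially"
    by (auto elim: eventually_mono)
  have "eventually (\<lambda>n. pc_fixed_pair d (c n) k (ball z0 \<delta>) M (z0 + r1 n) (z0 + r2 n)) sequentially"
    using inside lower lip
  proof eventually_elim
    case (elim n)
    show ?case
      by (rule pc_fixed_pair_if_displacement_factors[OF fac elim(1,2) \<open>m > 0\<close> _ elim(3,4)])
         (simp add: M_def)
  qed
  moreover have "(\<lambda>n. mult2 d (c n) k (z0 + r1 n)) \<longlonglongrightarrow> 1"
  proof (rule mult2_tendsto_1_if_displacement_factors[OF fac r])
    show "eventually (\<lambda>n. norm (poly (U n) (r1 n)) \<le> K) sequentially"
      using inside(1) upper by eventually_elim blast
  qed
  moreover have "(\<lambda>n. mult2 d (c n) k (z0 + r2 n)) \<longlonglongrightarrow> 1"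
  proof (rule mult2_tendsto_1_if_displacement_factors[OF _ r(2,1)])
    show "pc_displacement_poly d (c n) z0 k = [:-r2 n, 1:] * [:-r1 n, 1:] * U n" for n
      by (simp add: fac mult_ac)
    show "eventually (\<lambda>n. norm (poly (U n) (r2 n)) \<le> K) sequentially"
      using inside(2) upper by eventually_elim blast
  qed
  ultimately show ?thesis by (rule that[OF r \<open>\<delta> > 0\<close> \<open>M > 0\<close>])
qed

lemma eventually_pc_orbit_near_periodic:
  assumes "c \<longlonglongrightarrow> c0" "z \<longlonglongrightarrow> z0" "has_period (pc d c0) k z0" "\<epsilon> > 0"
  shows "eventually (\<lambda>n. (pc d (c n) ^^ k) (z n) \<in> ball z0 \<epsilon> \<and>
           (\<forall>i. 0 < i \<longrightarrow> i < 2 * k \<longrightarrow> i \<noteq> k \<longrightarrow> (pc d (c n) ^^ i) (z n) \<noteq> z n)) sequentially"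
proof -
  have returns: "(pc d c0 ^^ k) z0 = z0" using assms(3) by (simp add: has_period_def)
  have nonreturn: "(pc d c0 ^^ i) z0 \<noteq> z0" if "0 < i" "i < 2 * k" "i \<noteq> k" for i
  proof (cases "i < k")
    case False
    hence "(pc d c0 ^^ i) z0 = (pc d c0 ^^ (i - k)) z0"
      using returns by (metis funpow_add comp_apply le_add_diff_inverse2 not_less)
    thus ?thesis using assms(3) that False unfolding has_period_def by auto
  qed (use assms(3) that in \<open>auto simp: has_period_def\<close>)
  have "eventually (\<lambda>n. (pc d (c n) ^^ i) (z n) - z n \<noteq> 0) sequentially"
    if "i \<in> {i. 0 < i \<and> i < 2 * k \<and> i \<noteq> k}" for i
  proof (rule tendsto_imp_eventually_ne)
    show "(\<lambda>n. (pc d (c n) ^^ i) (z n) - z n) \<longlonglongrightarrow> (pc d c0 ^^ i) z0 - z0"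
      by (intro tendsto_diff pc_funpow_tendsto assms(1,2))
  qed (use that nonreturn in auto)
  hence "eventually (\<lambda>n. \<forall>i\<in>{i. 0 < i \<and> i < 2 * k \<and> i \<noteq> k}. (pc d (c n) ^^ i) (z n) \<noteq> z n) sequentially"
    by (intro eventually_ball_finite) auto
  moreover have "eventually (\<lambda>n. (pc d (c n) ^^ k) (z n) \<in> ball z0 \<epsilon>) sequentially"
    using pc_funpow_tendsto[OF assms(1,2), where d = d and m = k] returns assms(4)
    unfolding tendsto_iff by (simp add: dist_commute)
  ultimately show ?thesis by eventually_elim auto
qed

lemma eventually_pc_bifurcation_cases:
  assumes "d \<ge> 2" "simple_parabolic d c0 k z0" "c \<longlonglongrightarrow> c0"
  obtains z z' M where "z \<longlonglongrightarrow> z0" "z' \<longlonglongrightarrow> z0"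
    "(\<lambda>n. mult2 d (c n) k (z n)) \<longlonglongrightarrow> 1" "(\<lambda>n. mult2 d (c n) k (z' n)) \<longlonglongrightarrow> 1"
    "eventually (\<lambda>n. pc_bifurcation_cases d (c n) k M (z n) (z' n)) sequentially"
proof -
  have "odd k" and period: "has_period (pc d c0) k z0"
    using assms(2) by (simp_all add: simple_parabolic_def parabolic_def)
  obtain r1 r2 \<delta> M where r: "r1 \<longlonglongrightarrow> 0" "r2 \<longlonglongrightarrow> 0" and "\<delta> > 0" "M > 0"
    and pair: "eventually (\<lambda>n. pc_fixed_pair d (c n) k (ball z0 \<delta>) M (z0 + r1 n) (z0 + r2 n)) sequentially"
    and \<rho>: "(\<lambda>n. mult2 d (c n) k (z0 + r1 n)) \<longlonglongrightarrow> 1" "(\<lambda>n. mult2 d (c n) k (z0 + r2 n)) \<longlonglongrightarrow> 1"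
    using pc_displacement_fixed_pairs[OF assms] by blast
  define z z' where "z = (\<lambda>n. z0 + r1 n)" and "z' = (\<lambda>n. z0 + r2 n)"
  have lim: "z \<longlonglongrightarrow> z0" "z' \<longlonglongrightarrow> z0"
    using tendsto_add[OF tendsto_const r(1), of z0] tendsto_add[OF tendsto_const r(2), of z0]
    by (simp_all add: z_def z'_def)
  have mult: "(\<lambda>n. mult2 d (c n) k (z n)) \<longlonglongrightarrow> 1" "(\<lambda>n. mult2 d (c n) k (z' n)) \<longlonglongrightarrow> 1"
    using \<rho> by (simp_all add: z_def z'_def)
  have near_1: "eventually (\<lambda>n. norm (1 - mult2 d (c n) k (w n)) < 1 / M) sequentially"
    if "(\<lambda>n. mult2 d (c n) k (w n)) \<longlonglongrightarrow> 1" for w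
    using that \<open>M > 0\<close> unfolding tendsto_iff by (simp add: dist_norm norm_minus_commute)
  have cases: "eventually (\<lambda>n. pc_bifurcation_cases d (c n) k M (z n) (z' n)) sequentially"
    using pair eventually_pc_orbit_near_periodic[OF assms(3) lim(1) period \<open>\<delta> > 0\<close>]
      eventually_pc_orbit_near_periodic[OF assms(3) lim(2) period \<open>\<delta> > 0\<close>]
      near_1[OF mult(1)] near_1[OF mult(2)]
    unfolding z_def z'_def
  proof eventually_elim
    case (elim n)
    show ?case
      using elim by (intro pc_bifurcation_cases_if_fixed_pair[OF elim(1) \<open>odd k\<close>]) auto
  qed
  from lim mult cases show ?thesis by (rule that)
qed

theorem lemma3p2:
  fixes d k :: nat and c0 z0 :: complex and c :: "nat \<Rightarrow> complex"
  assumes "d \<ge> 2"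
    and "simple_parabolic d c0 k z0"
    and "c \<longlonglongrightarrow> c0" and "\<And>n. c n \<noteq> c0"
  shows "\<exists>z z' :: nat \<Rightarrow> complex.
     z \<longlonglongrightarrow> z0 \<and> z' \<longlonglongrightarrow> z0 \<and>
     (\<lambda>n. mult2 d (c n) k (z n)) \<longlonglongrightarrow> 1 \<and>
     (\<lambda>n. mult2 d (c n) k (z' n)) \<longlonglongrightarrow> 1 \<and>
     (\<exists>C::real. \<forall>\<^sub>F n in sequentially.
        (\<exists>m. has_period (pc d (c n)) m (z n)) \<and> (\<exists>m. has_period (pc d (c n)) m (z' n)) \<and>
        ( (has_period (pc d (c n)) k (z n) \<and> has_period (pc d (c n)) k (z' n) \<and>
           mult2 d (c n) k (z n) \<in> \<real> \<and> mult2 d (c n) k (z' n) \<in> \<real> \<and>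
           ((norm (mult2 d (c n) k (z n)) < 1 \<and> norm (mult2 d (c n) k (z' n)) > 1) \<or>
            (norm (mult2 d (c n) k (z n)) > 1 \<and> norm (mult2 d (c n) k (z' n)) < 1)))
        \<or> (z n = z' n \<and> parabolic d (c n) k (z n))
        \<or> (has_period (pc d (c n)) (2 * k) (z n) \<and> has_period (pc d (c n)) (2 * k) (z' n) \<and>
           (pc d (c n) ^^ k) (z n) = z' n \<and> (pc d (c n) ^^ k) (z' n) = z n \<and>
           mult2 d (c n) k (z' n) = cnj (mult2 d (c n) k (z n)) \<and>
           mult2 d (c n) k (z n) \<notin> \<real> \<and>
           \<bar>Re (mult2 d (c n) k (z n) - 1)\<bar> \<le> C * (Im (mult2 d (c n) k (z n)))\<^sup>2)))"
proof -
  obtain z z' M where "z \<longlonglongrightarrow> z0" "z' \<longlonglongrightarrow> z0"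
    "(\<lambda>n. mult2 d (c n) k (z n)) \<longlonglongrightarrow> 1" "(\<lambda>n. mult2 d (c n) k (z' n)) \<longlonglongrightarrow> 1"
    "eventually (\<lambda>n. pc_bifurcation_cases d (c n) k M (z n) (z' n)) sequentially"
    using eventually_pc_bifurcation_cases[OF assms(1-3)] by blast
  thus ?thesis unfolding pc_bifurcation_cases_def[symmetric] by blast
qed

end
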